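(* Let $d\ge 2$ and let $K$ be a finite shellable pure $d$-dimensional abstract simplicial complex whose dual graph is a path graph. Then the 1-skeleton graph of $K$ is Hamiltonian.
   Context: A finite abstract simplicial complex is a finite set of nonempty finite sets closed under taking nonempty subsets; its facets are its maximal sets, and it is pure of dimension $d$ if all facets have $d+1$ elements. It is shellable if there is an ordering $x_1,\dots,x_n$ of its facets such that for every $k\ge 2$ the intersection of the complex generated by $x_k$ with the complex generated by $x_1,\dots,x_{k-1}$ is a shellable pure $(d-1)$-dimensional complex (the complex generated by a collection of sets is the set of all their nonempty subsets). The dual graph has the facets as vertices, two distinct facets being adjacent if they intersect in a $(d-1)$-simplex (a set of $d$ elements). The 1-skeleton graph has vertices the one-element sets and edges the two-element sets; it is Hamiltonian if it has a closed simple cycle through every vertex exactly once. *)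

theory Defs
  imports Main
begin

definition simplicial_complex :: "'a set set \<Rightarrow> bool" where
  "simplicial_complex K \<longleftrightarrow> finite K \<and>
     (\<forall>s\<in>K. s \<noteq> {} \<and> finite s \<and> (\<forall>t. t \<subseteq> s \<and> t \<noteq> {} \<longrightarrow> t \<in> K))"

definition generated :: "'a set set \<Rightarrow> 'a set set" where
  "generated S = {t. t \<noteq> {} \<and> (\<exists>s\<in>S. t \<subseteq> s)}"

definition facets :: "'a set set \<Rightarrow> 'a set set" where
  "facets K = {s\<in>K. \<not> (\<exists>t\<in>K. s \<subset> t)}"

definition pure :: "nat \<Rightarrow> 'a set set \<Rightarrow> bool" where
  "pure d K \<longleftrightarrow> K \<noteq> {} \<and> (\<forall>s\<in>facets K. card s = d + 1)"

text \<open>For d = 0 the intersection condition is the empty ((-1)-dimensional) complex,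
which is regarded as shellable, so every 0-dimensional complex is shellable.\<close>
inductive shellable :: "nat \<Rightarrow> 'a set set \<Rightarrow> bool" where
  "\<lbrakk> pure d K; distinct xs; set xs = facets K;
     \<forall>k. 0 < k \<and> k < length xs \<longrightarrow>
        (d = 0 \<or> shellable (d - 1)
            (generated {xs ! k} \<inter> generated (set (take k xs)))) \<rbrakk>
   \<Longrightarrow> shellable d K"

definition dual_adj :: "nat \<Rightarrow> 'a set \<Rightarrow> 'a set \<Rightarrow> bool" where
  "dual_adj d F G \<longleftrightarrow> F \<noteq> G \<and> card (F \<inter> G) = d"

definition dual_graph_is_path :: "nat \<Rightarrow> 'a set set \<Rightarrow> bool" where
  "dual_graph_is_path d K \<longleftrightarrow> (\<exists>xs. distinct xs \<and> set xs = facets K \<and>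
     (\<forall>i j. i < length xs \<and> j < length xs \<longrightarrow>
        (dual_adj d (xs ! i) (xs ! j) \<longleftrightarrow> (i = Suc j \<or> j = Suc i))))"

definition skeleton_vertices :: "'a set set \<Rightarrow> 'a set" where
  "skeleton_vertices K = {v. {v} \<in> K}"

definition skeleton_hamiltonian :: "'a set set \<Rightarrow> bool" where
  "skeleton_hamiltonian K \<longleftrightarrow> (\<exists>vs. distinct vs \<and> set vs = skeleton_vertices K \<and>
     length vs \<ge> 3 \<and>
     (\<forall>i < length vs. {vs ! i, vs ! ((i + 1) mod length vs)} \<in> K))"

end

theory Submission
  imports Defs
begin

text \<open>
  List the facets F 0, ..., F n along the dual path. Consecutive facets share a ridge, so
  F (i+1) arises from F i by exchanging one vertex a i for one vertex b i. Shellability forces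
  the facets containing a fixed vertex to be consecutive along the path; hence b i is a vertex
  not seen before, and the vertex a i leaving F i already lay in F (i-1) (otherwise F (i-1) and
  F (i+1) would share a ridge). A Hamiltonian cycle is then grown facet by facet: start with any
  cycle through the vertices of F 0 and insert each new vertex b i into an edge of the current
  cycle lying in F i - {a i}. Such an edge exists because every vertex of F i shared with F (i-1)
  is avoided by some cycle edge inside F i, an invariant that survives the insertion.
\<close>

lemma simplicial_complex_finite: "simplicial_complex K \<Longrightarrow> finite K"
  by (simp add: simplicial_complex_def)

lemma simplicial_complex_finite_face: "simplicial_complex K \<Longrightarrow> s \<in> K \<Longrightarrow> finite s"
  by (simp add: simplicial_complex_def)

lemma simplicial_complex_face_closed:
  "simplicial_complex K \<Longrightarrow> s \<in> K \<Longrightarrow> t \<subseteq> s \<Longrightarrow> t \<noteq> {} \<Longrightarrow> t \<in> K"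
  unfolding simplicial_complex_def by blast

lemma facet_containing:
  assumes "finite K" "s \<in> K"
  obtains F where "F \<in> facets K" "s \<subseteq> F"
proof -
  obtain F where F: "F \<in> K" "s \<subseteq> F" and max: "\<forall>G\<in>K. F \<subseteq> G \<longrightarrow> F = G"
    using finite_has_maximal2[OF assms] by auto
  have "F \<in> facets K" unfolding facets_def using F(1) max by blast
  then show thesis using F(2) by (rule that)
qed

lemma pure_facet_card:
  assumes "simplicial_complex K" "pure d K" "F \<in> facets K"
  shows "finite F" "card F = Suc d"
proof -
  have "F \<in> K" using assms(3) unfolding facets_def by simp
  then show "finite F" using assms(1) by (rule simplicial_complex_finite_face[rotated])
  show "card F = Suc d" using assms(2,3) unfolding pure_def by simp
qed

lemma skeleton_vertices_eq_Union_facets: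
  assumes "simplicial_complex K"
  shows "skeleton_vertices K = \<Union>(facets K)"
proof (intro equalityI subsetI)
  fix v assume "v \<in> skeleton_vertices K"
  have "finite K" using assms by (rule simplicial_complex_finite)
  moreover from \<open>v \<in> skeleton_vertices K\<close> have "{v} \<in> K" unfolding skeleton_vertices_def by simp
  ultimately obtain F where "F \<in> facets K" "{v} \<subseteq> F" by (rule facet_containing)
  then show "v \<in> \<Union>(facets K)" by blast
next
  fix v assume "v \<in> \<Union>(facets K)"
  then obtain F where "F \<in> facets K" "v \<in> F" by blast
  then have "F \<in> K" "v \<in> F" by (simp_all add: facets_def)
  then have "{v} \<in> K" using simplicial_complex_face_closed[OF assms] by blast
  then show "v \<in> skeleton_vertices K" unfolding skeleton_vertices_def by simp
qed

lemma card_Int_less: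
  assumes "finite A" "finite B" "card A = card B" "A \<noteq> B"
  shows "card (A \<inter> B) < card A"
proof -
  have "A \<inter> B \<noteq> A"
  proof
    assume "A \<inter> B = A"
    then have "A \<subseteq> B" by blast
    then show False using card_subset_eq[OF assms(2)] assms(3,4) by simp
  qed
  then show ?thesis using assms(1) by (intro psubset_card_mono) auto
qed

lemma exchange_of_card_Int:
  assumes "finite A" "finite B" "card A = Suc d" "card B = Suc d" "card (A \<inter> B) = d"
  obtains a b where "a \<in> A" "b \<notin> A" "B = insert b (A - {a})"
proof -
  have "card (A - B) = 1" using assms card_Diff_subset_Int[of A B] by simp
  then obtain a where a: "A - B = {a}" by (rule card_1_singletonE)
  have "card (B - A) = 1" using assms card_Diff_subset_Int[of B A] by (simp add: Int_commute)
  then obtain b where b: "B - A = {b}" by (rule card_1_singletonE)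
  have "a \<in> A" "b \<notin> A" "B = insert b (A - {a})" using a b by blast+
  then show thesis by (rule that)
qed

lemma card_Int_exchange_ge:
  assumes "finite X" "card X = Suc d" "card (W \<inter> X) = d" "a \<in> X" "a \<notin> W"
  shows "d \<le> card (W \<inter> insert b (X - {a}))"
proof -
  have "card (X - W) = 1" using assms card_Diff_subset_Int[of X W] by (simp add: Int_commute)
  then have "X - W = {a}" using assms(4,5) by (metis card_1_singletonE Diff_iff singletonD)
  then have "X - {a} \<subseteq> W \<inter> insert b (X - {a})" by blast
  moreover have "card (X - {a}) = d" using assms(1,2,4) by simp
  ultimately show ?thesis using assms(1) card_mono[of "W \<inter> insert b (X - {a})" "X - {a}"] by simp
qed

lemma add_mod_neq:
  fixes k n j :: nat
  assumes "k < n" "0 < j" "j < n"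
  shows "(k + j) mod n \<noteq> k"
proof (cases "k + j < n")
  case False
  then have "(k + j) mod n = k + j - n" using assms by (simp add: le_mod_geq)
  moreover have "k + j - n < k" using assms False by simp
  ultimately show ?thesis by simp
qed (use assms in simp)

lemma Suc_mod_less: "i < n \<Longrightarrow> Suc i mod n < n"
  by (cases n) auto

definition cycle_edges :: "'a list \<Rightarrow> 'a set set" where
  "cycle_edges vs = {{vs ! i, vs ! (Suc i mod length vs)} | i. i < length vs}"

lemma cycle_edgeI: "i < length vs \<Longrightarrow> {vs ! i, vs ! (Suc i mod length vs)} \<in> cycle_edges vs"
  unfolding cycle_edges_def by blast

lemma cycle_edgeE:
  assumes "e \<in> cycle_edges vs"
  obtains i where "i < length vs" "e = {vs ! i, vs ! (Suc i mod length vs)}"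
  using assms unfolding cycle_edges_def by blast

lemma cycle_edges_subset_set: "e \<in> cycle_edges vs \<Longrightarrow> e \<subseteq> set vs"
  by (elim cycle_edgeE) (auto intro!: nth_mem Suc_mod_less)

lemma cycle_edge_doubleton:
  assumes "distinct vs" "2 \<le> length vs" "e \<in> cycle_edges vs"
  obtains u w where "u \<noteq> w" "e = {u, w}"
proof -
  obtain i where i: "i < length vs" "e = {vs ! i, vs ! (Suc i mod length vs)}"
    using assms(3) by (rule cycle_edgeE)
  have "Suc i mod length vs \<noteq> i"
    using add_mod_neq[of i "length vs" 1] i(1) assms(2) by simp
  then have "vs ! i \<noteq> vs ! (Suc i mod length vs)"
    using assms(1) i(1) Suc_mod_less[OF i(1)] by (simp add: nth_eq_iff_index_eq)
  then show thesis using i(2) that by blast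
qed

lemma cycle_edge_avoiding:
  assumes "distinct vs" "3 \<le> length vs" "x \<in> set vs"
  shows "\<exists>e\<in>cycle_edges vs. e \<subseteq> set vs - {x}"
proof -
  let ?L = "length vs"
  obtain k where k: "k < ?L" "x = vs ! k" using assms(3) by (auto simp: in_set_conv_nth)
  define i where "i = Suc k mod ?L"
  have i: "i < ?L" using k by (simp add: i_def Suc_mod_less)
  have "i \<noteq> k" "Suc i mod ?L \<noteq> k"
    using add_mod_neq[of k ?L 1] add_mod_neq[of k ?L 2] k assms(2)
    unfolding i_def by (simp_all add: mod_Suc_eq)
  then have "x \<notin> {vs ! i, vs ! (Suc i mod ?L)}"
    using assms(1) k i Suc_mod_less[OF i] by (auto simp: nth_eq_iff_index_eq)
  moreover have "{vs ! i, vs ! (Suc i mod ?L)} \<in> cycle_edges vs" using i by (rule cycle_edgeI)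
  ultimately show ?thesis using cycle_edges_subset_set by blast
qed

lemma cycle_edges_rotate_subset: "cycle_edges (rotate m vs) \<subseteq> cycle_edges vs"
proof
  fix e assume "e \<in> cycle_edges (rotate m vs)"
  then obtain i where i: "i < length vs"
    and e: "e = {rotate m vs ! i, rotate m vs ! (Suc i mod length vs)}"
    by (auto elim: cycle_edgeE)
  have pos: "0 < length vs" using i by linarith
  define k where "k = (m + i) mod length vs"
  have "(m + Suc i mod length vs) mod length vs = Suc k mod length vs"
    unfolding k_def by (simp add: mod_Suc_eq mod_add_right_eq)
  moreover have "Suc i mod length vs < length vs" using i by (rule Suc_mod_less)
  ultimately have "e = {vs ! k, vs ! (Suc k mod length vs)}"
    using i by (simp add: e nth_rotate k_def)
  moreover have "k < length vs" using pos by (simp add: k_def)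
  ultimately show "e \<in> cycle_edges vs" by (simp add: cycle_edgeI)
qed

lemma cycle_edges_rotate [simp]: "cycle_edges (rotate m vs) = cycle_edges vs"
proof
  show "cycle_edges vs \<subseteq> cycle_edges (rotate m vs)"
  proof (cases "vs = []")
    case False
    let ?L = "length vs"
    have "?L - m mod ?L + m = ?L + ?L * (m div ?L)"
      using False by (simp add: minus_mod_eq_mult_div[symmetric] le_add_diff_inverse2)
    then have "rotate (?L - m mod ?L) (rotate m vs) = vs"
      by (metis rotate_rotate rotate_conv_mod mod_mult_self2 mod_self rotate0 mod_add_self1 id_apply)
    then show ?thesis using cycle_edges_rotate_subset by metis
  qed simp
qed (rule cycle_edges_rotate_subset)

lemma cycle_edges_snoc:
  assumes "vs \<noteq> []"
  shows "cycle_edges (vs @ [b]) \<subseteq> insert {last vs, b} (insert {b, hd vs} (cycle_edges vs))"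
    and "{last vs, b} \<in> cycle_edges (vs @ [b])" and "{b, hd vs} \<in> cycle_edges (vs @ [b])"
proof -
  define L where "L = length vs"
  have L: "0 < L" "length (vs @ [b]) = Suc L" using assms by (simp_all add: L_def)
  have last: "{last vs, b} = {(vs @ [b]) ! (L - 1), (vs @ [b]) ! (Suc (L - 1) mod Suc L)}"
    using assms L by (simp add: last_conv_nth nth_append L_def)
  have hd: "{b, hd vs} = {(vs @ [b]) ! L, (vs @ [b]) ! (Suc L mod Suc L)}"
    using assms by (simp add: hd_conv_nth nth_append L_def)
  show "{last vs, b} \<in> cycle_edges (vs @ [b])" "{b, hd vs} \<in> cycle_edges (vs @ [b])"
    using cycle_edgeI[of "L - 1" "vs @ [b]"] cycle_edgeI[of L "vs @ [b]"] last hd L by auto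
  show "cycle_edges (vs @ [b]) \<subseteq> insert {last vs, b} (insert {b, hd vs} (cycle_edges vs))"
  proof
    fix e assume "e \<in> cycle_edges (vs @ [b])"
    then obtain i where i: "i < Suc L" and e: "e = {(vs @ [b]) ! i, (vs @ [b]) ! (Suc i mod Suc L)}"
      using L(2) by (metis cycle_edgeE)
    consider "Suc i < L" | "i = L - 1" | "i = L" using i by linarith
    then show "e \<in> insert {last vs, b} (insert {b, hd vs} (cycle_edges vs))"
    proof cases
      case 1
      then have "e = {vs ! i, vs ! (Suc i mod L)}" by (simp add: e nth_append L_def)
      then show ?thesis using 1 cycle_edgeI[of i vs] by (simp add: L_def)
    qed (use e last hd L in auto)
  qed
qed

text \<open>Rotate the edge to the closing position of the cycle, then append b.\<close>

lemma cycle_edges_insert: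
  assumes "{u, w} \<in> cycle_edges vs"
  obtains zs where "set zs = insert b (set vs)" "length zs = Suc (length vs)"
    "distinct zs \<longleftrightarrow> distinct vs \<and> b \<notin> set vs"
    "cycle_edges zs \<subseteq> insert {u, b} (insert {b, w} (cycle_edges vs))"
    "{u, b} \<in> cycle_edges zs" "{b, w} \<in> cycle_edges zs"
proof -
  obtain i where i: "i < length vs" and uw: "{u, w} = {vs ! i, vs ! (Suc i mod length vs)}"
    using assms by (rule cycle_edgeE)
  define rs where "rs = rotate (Suc i) vs"
  have rs: "rs \<noteq> []" using i by (auto simp: rs_def)
  have hd: "hd rs = vs ! (Suc i mod length vs)"
    using rs unfolding rs_def by (simp add: hd_rotate_conv_nth del: rotate_Suc)
  have last: "last rs = vs ! i"
  proof -
    have "last rs = rs ! (length vs - 1)" using rs by (simp add: last_conv_nth rs_def del: rotate_Suc)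
    also have "\<dots> = vs ! ((Suc i + (length vs - 1)) mod length vs)"
      unfolding rs_def using i by (intro nth_rotate) simp
    also have "(Suc i + (length vs - 1)) mod length vs = i" using i by (simp add: le_mod_geq)
    finally show ?thesis .
  qed
  have new: "{{u, b}, {b, w}} = {{last rs, b}, {b, hd rs}}"
  proof -
    have "u = last rs \<and> w = hd rs \<or> u = hd rs \<and> w = last rs"
      using uw unfolding hd last doubleton_eq_iff .
    then show ?thesis
    proof (elim disjE conjE)
      assume "u = hd rs" "w = last rs"
      then show ?thesis
        by (simp add: insert_commute[of "hd rs" b] insert_commute[of b "last rs"]
            insert_commute[of "{last rs, b}"])
    qed simp
  qed
  have rotated: "cycle_edges rs = cycle_edges vs"
    unfolding rs_def by (rule cycle_edges_rotate)
  show thesis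
  proof
    show "set (rs @ [b]) = insert b (set vs)" "length (rs @ [b]) = Suc (length vs)"
      "distinct (rs @ [b]) \<longleftrightarrow> distinct vs \<and> b \<notin> set vs"
      by (simp_all add: rs_def del: rotate_Suc)
    have "cycle_edges (rs @ [b]) \<subseteq> {{last rs, b}, {b, hd rs}} \<union> cycle_edges rs"
      using cycle_edges_snoc(1)[OF rs, of b] by blast
    then show "cycle_edges (rs @ [b]) \<subseteq> insert {u, b} (insert {b, w} (cycle_edges vs))"
      unfolding new[symmetric] rotated by blast
    have "{{last rs, b}, {b, hd rs}} \<subseteq> cycle_edges (rs @ [b])"
      using cycle_edges_snoc(2,3)[OF rs, of b] by simp
    then show "{u, b} \<in> cycle_edges (rs @ [b])" "{b, w} \<in> cycle_edges (rs @ [b])"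
      unfolding new[symmetric] by simp_all
  qed
qed

definition covering_cycle :: "'a set set \<Rightarrow> 'a list \<Rightarrow> bool" where
  "covering_cycle S vs \<longleftrightarrow> distinct vs \<and> set vs = \<Union>S \<and> 3 \<le> length vs \<and>
     (\<forall>e\<in>cycle_edges vs. \<exists>F\<in>S. e \<subseteq> F)"

lemma skeleton_hamiltonian_of_covering_cycle:
  assumes complex: "simplicial_complex K" and "covering_cycle (facets K) vs"
  shows "skeleton_hamiltonian K"
proof -
  have vs: "distinct vs" "set vs = \<Union>(facets K)" "3 \<le> length vs"
    and edges: "\<forall>e\<in>cycle_edges vs. \<exists>F\<in>facets K. e \<subseteq> F"
    using \<open>covering_cycle (facets K) vs\<close> unfolding covering_cycle_def by auto
  have "{vs ! i, vs ! ((i + 1) mod length vs)} \<in> K" if "i < length vs" for i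
  proof -
    have "{vs ! i, vs ! ((i + 1) mod length vs)} \<in> cycle_edges vs" using cycle_edgeI[OF that] by simp
    then obtain F where "F \<in> K" "{vs ! i, vs ! ((i + 1) mod length vs)} \<subseteq> F"
      using edges unfolding facets_def by blast
    then show ?thesis by (rule simplicial_complex_face_closed[OF complex]) simp
  qed
  moreover have "set vs = skeleton_vertices K"
    using vs(2) skeleton_vertices_eq_Union_facets[OF complex] by simp
  ultimately show ?thesis unfolding skeleton_hamiltonian_def using vs(1,3) by blast
qed

lemma covering_cycle_exchange:
  assumes cycle: "covering_cycle S vs" and X: "X \<in> S"
    and e: "e \<in> cycle_edges vs" "e \<subseteq> X - {a}" and b: "b \<notin> \<Union>S"
  obtains zs where "covering_cycle (insert (insert b (X - {a})) S) zs"
    "\<And>x. x \<in> X - {a} \<Longrightarrow> \<exists>e\<in>cycle_edges zs. e \<subseteq> insert b (X - {a}) - {x}"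
proof -
  let ?Y = "insert b (X - {a})"
  have vs: "distinct vs" "set vs = \<Union>S" "3 \<le> length vs"
    and edges: "\<forall>e\<in>cycle_edges vs. \<exists>F\<in>S. e \<subseteq> F"
    using cycle by (simp_all add: covering_cycle_def)
  have "2 \<le> length vs" using vs(3) by simp
  then obtain u w where uw: "u \<noteq> w" "e = {u, w}" by (rule cycle_edge_doubleton[OF vs(1) _ e(1)])
  obtain zs where zs: "set zs = insert b (set vs)" "length zs = Suc (length vs)"
    "distinct zs \<longleftrightarrow> distinct vs \<and> b \<notin> set vs"
    "cycle_edges zs \<subseteq> insert {u, b} (insert {b, w} (cycle_edges vs))"
    "{u, b} \<in> cycle_edges zs" "{b, w} \<in> cycle_edges zs"
    using e(1) unfolding uw(2) by (rule cycle_edges_insert)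
  have new_edges: "{u, b} \<subseteq> ?Y" "{b, w} \<subseteq> ?Y" using e uw by auto
  show thesis
  proof
    show "covering_cycle (insert ?Y S) zs"
      unfolding covering_cycle_def
    proof (intro conjI)
      show "distinct zs" "3 \<le> length zs" using zs(2,3) vs b by simp_all
      show "set zs = \<Union>(insert ?Y S)" using zs(1) vs(2) X by auto
      show "\<forall>e'\<in>cycle_edges zs. \<exists>F\<in>insert ?Y S. e' \<subseteq> F"
      proof
        fix e' assume "e' \<in> cycle_edges zs"
        then consider "e' = {u, b}" | "e' = {b, w}" | "e' \<in> cycle_edges vs" using zs(4) by blast
        then show "\<exists>F\<in>insert ?Y S. e' \<subseteq> F"
          by cases (use edges new_edges in auto)
      qed
    qed
  next
    fix x assume x: "x \<in> X - {a}"
    have "x \<noteq> b" using x X b by blast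
    show "\<exists>e\<in>cycle_edges zs. e \<subseteq> ?Y - {x}"
    proof (cases "x = u")
      case False
      then show ?thesis using zs(5) new_edges \<open>x \<noteq> b\<close> by (intro bexI[of _ "{u, b}"]) auto
    next
      case True
      then show ?thesis using zs(6) new_edges \<open>x \<noteq> b\<close> uw(1) by (intro bexI[of _ "{b, w}"]) auto
    qed
  qed
qed

definition exchange_chain :: "'a set list \<Rightarrow> bool" where
  "exchange_chain Fs \<longleftrightarrow> (\<forall>i. Suc i < length Fs \<longrightarrow>
     (\<exists>a b. a \<in> Fs ! i \<and> (i = 0 \<or> a \<in> Fs ! (i - 1)) \<and> b \<notin> \<Union>(set (take (Suc i) Fs)) \<and>
        Fs ! Suc i = insert b (Fs ! i - {a})))"

text \<open>The second conjunct is the invariant of the construction: a vertex that the next exchange may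
  remove is avoided by some cycle edge inside the current set.\<close>

lemma exchange_chain_prefix_cycle:
  assumes chain: "exchange_chain Fs" and first: "finite (Fs ! 0)" "3 \<le> card (Fs ! 0)"
    and i: "i < length Fs"
  shows "\<exists>vs. covering_cycle (set (take (Suc i) Fs)) vs \<and>
    (\<forall>x\<in>Fs ! i. (i = 0 \<or> x \<in> Fs ! (i - 1)) \<longrightarrow> (\<exists>e\<in>cycle_edges vs. e \<subseteq> Fs ! i - {x}))"
  using i
proof (induction i)
  case 0
  obtain vs where vs: "set vs = Fs ! 0" "distinct vs"
    using finite_distinct_list[OF first(1)] by blast
  have length: "3 \<le> length vs" using vs first(2) distinct_card by metis
  have "take (Suc 0) Fs = [Fs ! 0]" using "0.prems" by (cases Fs) simp_all
  then have "covering_cycle (set (take (Suc 0) Fs)) vs"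
    unfolding covering_cycle_def using vs length cycle_edges_subset_set[of _ vs] by simp
  moreover have "\<forall>x\<in>Fs ! 0. \<exists>e\<in>cycle_edges vs. e \<subseteq> Fs ! 0 - {x}"
    using cycle_edge_avoiding[OF vs(2) length] vs(1) by simp
  ultimately show ?case by blast
next
  case (Suc i)
  let ?X = "Fs ! i" and ?P = "set (take (Suc i) Fs)"
  obtain a b where a: "a \<in> ?X" "i = 0 \<or> a \<in> Fs ! (i - 1)"
    and b: "b \<notin> \<Union>?P" and Y: "Fs ! Suc i = insert b (?X - {a})"
    using chain Suc.prems unfolding exchange_chain_def by blast
  obtain vs where cycle: "covering_cycle ?P vs"
    and avoid: "\<forall>x\<in>?X. (i = 0 \<or> x \<in> Fs ! (i - 1)) \<longrightarrow> (\<exists>e\<in>cycle_edges vs. e \<subseteq> ?X - {x})"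
    using Suc.IH Suc.prems by auto
  obtain e where "e \<in> cycle_edges vs" "e \<subseteq> ?X - {a}" using avoid a by blast
  moreover have X: "?X \<in> ?P" using Suc.prems by (simp add: take_Suc_conv_app_nth)
  ultimately obtain zs where "covering_cycle (insert (Fs ! Suc i) ?P) zs"
    and "\<And>x. x \<in> ?X - {a} \<Longrightarrow> \<exists>e\<in>cycle_edges zs. e \<subseteq> Fs ! Suc i - {x}"
    unfolding Y using covering_cycle_exchange[OF cycle _ _ _ b] by metis
  moreover have "take (Suc (Suc i)) Fs = take (Suc i) Fs @ [Fs ! Suc i]"
    using Suc.prems by (simp add: take_Suc_conv_app_nth)
  moreover have "x \<in> ?X - {a}" if "x \<in> Fs ! Suc i" "x \<in> ?X" for x
    using that Y b X by auto
  ultimately show ?case by auto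
qed

lemma exchange_chain_covering_cycle:
  assumes "exchange_chain Fs" "Fs \<noteq> []" "finite (Fs ! 0)" "3 \<le> card (Fs ! 0)"
  shows "\<exists>vs. covering_cycle (set Fs) vs"
  using exchange_chain_prefix_cycle[OF assms(1,3,4), of "length Fs - 1"] assms(2) by auto

lemma face_in_shelling_ridge:
  assumes complex: "simplicial_complex K" and pure: "pure d K" and "1 \<le> d"
    and ys: "distinct ys" "set ys = facets K" and k: "k < length ys"
    and pure_intersection: "pure (d - 1) (generated {ys ! k} \<inter> generated (set (take k ys)))"
    and t: "t \<in> generated {ys ! k} \<inter> generated (set (take k ys))"
  shows "\<exists>j<k. t \<subseteq> ys ! j \<and> card (ys ! j \<inter> ys ! k) = d"
proof -
  let ?C = "generated {ys ! k} \<inter> generated (set (take k ys))"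
  note facet_card = pure_facet_card[OF complex pure]
  have "?C \<subseteq> Pow (ys ! k)" unfolding generated_def by auto
  moreover have "finite (ys ! k)" using facet_card(1) k ys(2) nth_mem by blast
  ultimately have "finite ?C" by (meson finite_Pow_iff finite_subset)
  then obtain r where r: "r \<in> facets ?C" "t \<subseteq> r" using t by (rule facet_containing)
  then have "card r = d" "r \<in> ?C" using pure_intersection \<open>1 \<le> d\<close> unfolding pure_def facets_def by auto
  then obtain j where j: "j < k" "r \<subseteq> ys ! j" "r \<subseteq> ys ! k"
    unfolding generated_def by (auto simp: in_set_conv_nth)
  have facets: "ys ! j \<in> facets K" "ys ! k \<in> facets K" using j k ys(2) by auto
  have "ys ! j \<noteq> ys ! k" using j k ys(1) by (simp add: nth_eq_iff_index_eq)
  then have "card (ys ! j \<inter> ys ! k) < Suc d"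
    using card_Int_less[of "ys ! j" "ys ! k"] facet_card[OF facets(1)] facet_card[OF facets(2)] by simp
  moreover have "card r \<le> card (ys ! j \<inter> ys ! k)"
    using j facet_card(1)[OF facets(1)] by (intro card_mono) auto
  ultimately show ?thesis using j r(2) \<open>card r = d\<close> by (intro exI[of _ j]) auto
qed

lemma shellable_shelling_order:
  assumes "1 \<le> d" "simplicial_complex K" "shellable d K"
  obtains ys where "distinct ys" "set ys = facets K"
    "\<And>k. 0 < k \<Longrightarrow> k < length ys \<Longrightarrow> \<exists>j<k. card (ys ! j \<inter> ys ! k) = d"
    "\<And>j k. j < k \<Longrightarrow> k < length ys \<Longrightarrow> ys ! j \<inter> ys ! k \<noteq> {} \<Longrightarrow>
       \<exists>j'<k. ys ! j \<inter> ys ! k \<subseteq> ys ! j' \<and> card (ys ! j' \<inter> ys ! k) = d"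
proof -
  obtain ys where pure: "pure d K" and ys: "distinct ys" "set ys = facets K"
    and steps: "\<forall>k. 0 < k \<and> k < length ys \<longrightarrow> (d = 0 \<or> shellable (d - 1)
        (generated {ys ! k} \<inter> generated (set (take k ys))))"
    using assms(3) by (cases rule: shellable.cases) blast
  have pure_step: "pure (d - 1) (generated {ys ! k} \<inter> generated (set (take k ys)))"
    if "0 < k" "k < length ys" for k
  proof -
    have "shellable (d - 1) (generated {ys ! k} \<inter> generated (set (take k ys)))"
      using steps that assms(1) by auto
    then show ?thesis by (cases rule: shellable.cases)
  qed
  note ridge = face_in_shelling_ridge[OF assms(2) pure assms(1) ys]
  show thesis
  proof (rule that[OF ys])
    fix k assume k: "0 < k" "k < length ys"
    then obtain t where "t \<in> generated {ys ! k} \<inter> generated (set (take k ys))"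
      using pure_step[OF k] unfolding pure_def by blast
    then show "\<exists>j<k. card (ys ! j \<inter> ys ! k) = d" using ridge[OF k(2) pure_step[OF k]] by blast
  next
    fix j k assume jk: "j < k" "k < length ys" "ys ! j \<inter> ys ! k \<noteq> {}"
    moreover have "ys ! j \<in> set (take k ys)" using jk by (force simp: in_set_conv_nth)
    ultimately have "ys ! j \<inter> ys ! k \<in> generated {ys ! k} \<inter> generated (set (take k ys))"
      unfolding generated_def by blast
    then show "\<exists>j'<k. ys ! j \<inter> ys ! k \<subseteq> ys ! j' \<and> card (ys ! j' \<inter> ys ! k) = d"
      using ridge[OF jk(2) pure_step] jk by simp
  qed
qed

locale shelled_facet_path =
  fixes K :: "'a set set" and d :: nat and xs ys :: "'a set list"
  assumes complex: "simplicial_complex K" and pure: "pure d K"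
    and path_distinct: "distinct xs" and path_facets: "set xs = facets K"
    and path_adjacent: "\<And>i j. i < length xs \<Longrightarrow> j < length xs \<Longrightarrow>
      dual_adj d (xs ! i) (xs ! j) \<longleftrightarrow> i = Suc j \<or> j = Suc i"
    and shelling_distinct: "distinct ys" and shelling_facets: "set ys = facets K"
    and shelling_connected: "\<And>k. 0 < k \<Longrightarrow> k < length ys \<Longrightarrow> \<exists>j<k. card (ys ! j \<inter> ys ! k) = d"
    and shelling_ridge: "\<And>j k. j < k \<Longrightarrow> k < length ys \<Longrightarrow> ys ! j \<inter> ys ! k \<noteq> {} \<Longrightarrow>
      \<exists>j'<k. ys ! j \<inter> ys ! k \<subseteq> ys ! j' \<and> card (ys ! j' \<inter> ys ! k) = d"
begin

lemma path_facet_card: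
  assumes "i < length xs"
  shows "finite (xs ! i)" "card (xs ! i) = Suc d"
  using pure_facet_card[OF complex pure] assms path_facets nth_mem by blast+

lemma path_card_Int_eq_iff:
  assumes "i < length xs" "j < length xs"
  shows "card (xs ! i \<inter> xs ! j) = d \<longleftrightarrow> i = Suc j \<or> j = Suc i"
proof -
  have "card (xs ! i \<inter> xs ! j) = d \<Longrightarrow> xs ! i \<noteq> xs ! j"
    using path_facet_card[OF assms(1)] by auto
  then show ?thesis using path_adjacent[OF assms] unfolding dual_adj_def by blast
qed

lemma path_index_of_shelling:
  assumes "p < length ys"
  obtains l where "l < length xs" "ys ! p = xs ! l"
  using assms shelling_facets path_facets by (metis in_set_conv_nth nth_mem)

lemma shelling_index_of_path:
  assumes "l < length xs"
  obtains p where "p < length ys" "xs ! l = ys ! p"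
  using assms shelling_facets path_facets by (metis in_set_conv_nth nth_mem)

definition shelled :: "nat \<Rightarrow> nat set" where
  "shelled k = {l. l < length xs \<and> xs ! l \<in> set (take k ys)}"

lemma shelled_iff:
  assumes "l < length xs" "p < length ys" "xs ! l = ys ! p"
  shows "l \<in> shelled k \<longleftrightarrow> p < k"
  using assms shelling_distinct unfolding shelled_def
  by (auto simp: in_set_conv_nth nth_eq_iff_index_eq)

lemma shelled_Suc:
  assumes "k < length ys" "l < length xs" "ys ! k = xs ! l"
  shows "shelled (Suc k) = insert l (shelled k)"
proof -
  have "set (take (Suc k) ys) = insert (xs ! l) (set (take k ys))"
    using assms by (simp add: take_Suc_conv_app_nth)
  then show ?thesis
    unfolding shelled_def using assms(2) path_distinct by (auto simp: nth_eq_iff_index_eq)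
qed

lemma shelled_interval:
  assumes "0 < k" "k \<le> length ys"
  shows "\<exists>a b. shelled k = {a..b}"
  using assms
proof (induction k)
  case (Suc k)
  obtain l where l: "l < length xs" "ys ! k = xs ! l"
    using path_index_of_shelling Suc.prems by (metis Suc_le_lessD)
  have step: "shelled (Suc k) = insert l (shelled k)"
    using shelled_Suc Suc.prems l by (simp add: Suc_le_eq)
  show ?case
  proof (cases "k = 0")
    case True
    then have "shelled (Suc k) = {l..l}" using step by (simp add: shelled_def)
    then show ?thesis by blast
  next
    case False
    then obtain a b where ab: "shelled k = {a..b}" using Suc by auto
    have new: "l \<notin> shelled k" using shelled_iff[of l k k] l Suc.prems by simp
    obtain j where j: "j < k" "card (ys ! j \<inter> ys ! k) = d"
      using shelling_connected[of k] False Suc.prems by (auto simp: Suc_le_eq)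
    obtain l' where l': "l' < length xs" "ys ! j = xs ! l'"
      using path_index_of_shelling j Suc.prems by (metis Suc_le_lessD less_trans)
    have "l' \<in> shelled k" using shelled_iff[of l' j k] l' j Suc.prems by simp
    moreover have "l = Suc l' \<or> l' = Suc l" using path_card_Int_eq_iff[OF l'(1) l(1)] j l l' by auto
    ultimately have "l = Suc b \<or> Suc l = a" "a \<le> b" using new ab by auto
    then show ?thesis
    proof (elim disjE)
      assume "l = Suc b"
      then have "shelled (Suc k) = {a..Suc b}"
        using step ab \<open>a \<le> b\<close> by (simp add: atLeastAtMostSuc_conv)
      then show ?thesis by blast
    next
      assume "Suc l = a"
      then have "shelled (Suc k) = insert l {Suc l..b}" using step ab by simp
      also have "\<dots> = {l..b}" using \<open>Suc l = a\<close> \<open>a \<le> b\<close> by (intro atLeastAtMost_insertL) simp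
      finally show ?thesis by blast
    qed
  qed
qed simp

text \<open>The shelling ridge containing the intersection with the earlier facet is adjacent to r, and it
  lies on the side of s because the positions shelled before r form an interval that contains
  s but not r.\<close>

lemma vertex_in_path_neighbour:
  assumes s: "s < length xs" and r: "r < length xs" and pq: "p < q" "q < length ys"
    and "xs ! s = ys ! p" "xs ! r = ys ! q" and v: "v \<in> xs ! s" "v \<in> xs ! r"
  shows "\<exists>l<length xs. v \<in> xs ! l \<and> (s < r \<and> Suc l = r \<or> r < s \<and> l = Suc r)"
proof -
  obtain j where j: "j < q" "ys ! p \<inter> ys ! q \<subseteq> ys ! j" "card (ys ! j \<inter> ys ! q) = d"
    using shelling_ridge[OF pq] assms by blast
  obtain l where l: "l < length xs" "ys ! j = xs ! l"
    using path_index_of_shelling j(1) pq(2) by (metis less_trans)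
  have "l = Suc r \<or> r = Suc l" using path_card_Int_eq_iff[OF l(1) r] j(3) l assms by simp
  moreover obtain a b where ab: "shelled q = {a..b}" using shelled_interval pq by (metis le_less zero_less_iff_neq_zero not_less0)
  moreover have "s \<in> shelled q" "l \<in> shelled q" "r \<notin> shelled q"
    using shelled_iff[OF s _ \<open>xs ! s = ys ! p\<close>] shelled_iff[OF l(1) _ l(2)[symmetric]]
      shelled_iff[OF r _ \<open>xs ! r = ys ! q\<close>] pq j(1) by auto
  moreover have "s \<noteq> r" using assms shelling_distinct by (metis nth_eq_iff_index_eq less_trans less_irrefl)
  ultimately have "s < r \<and> Suc l = r \<or> r < s \<and> l = Suc r" by auto
  moreover have "v \<in> xs ! l" using j(2) l(2) v assms by auto
  ultimately show ?thesis using l(1) by blast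
qed

lemma vertex_facets_interval:
  assumes "i \<le> k" "k \<le> j" "j < length xs" "v \<in> xs ! i" "v \<in> xs ! j"
  shows "v \<in> xs ! k"
  using assms
proof (induction "j - i" arbitrary: i j rule: less_induct)
  case less
  show ?case
  proof (cases "j \<le> Suc i")
    case True
    then have "k = i \<or> k = j" using less.prems by auto
    then show ?thesis using less.prems by auto
  next
    case False
    have ij: "i < length xs" "j < length xs" "i < j" using less.prems False by auto
    obtain p where p: "p < length ys" "xs ! i = ys ! p" using shelling_index_of_path ij(1) .
    obtain q where q: "q < length ys" "xs ! j = ys ! q" using shelling_index_of_path ij(2) .
    have "xs ! i \<noteq> xs ! j" using ij path_distinct by (simp add: nth_eq_iff_index_eq)
    then consider "p < q" | "q < p" using p q by fastforce
    then show ?thesis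
    proof cases
      case 1
      then obtain l where "v \<in> xs ! l" "Suc l = j"
        using vertex_in_path_neighbour[OF ij(1,2) 1 q(1) p(2) q(2)] less.prems ij by auto
      then have "v \<in> xs ! (j - 1)" by auto
      moreover have "j - 1 - i < j - i" using ij by simp
      ultimately show ?thesis
        using less.hyps[of "j - 1" i] less.prems by (cases "k = j") auto
    next
      case 2
      then obtain l where "v \<in> xs ! l" "l = Suc i"
        using vertex_in_path_neighbour[OF ij(2,1) 2 p(1) q(2) p(2)] less.prems ij by auto
      then have "v \<in> xs ! Suc i" by simp
      moreover have "j - Suc i < j - i" using ij by simp
      ultimately show ?thesis
        using less.hyps[of j "Suc i"] less.prems by (cases "k = i") auto
    qed
  qed
qed

lemma path_exchange_chain: "exchange_chain xs"
  unfolding exchange_chain_def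
proof (intro allI impI)
  fix i assume i: "Suc i < length xs"
  let ?X = "xs ! i" and ?Y = "xs ! Suc i"
  have X: "finite ?X" "card ?X = Suc d" and Y: "finite ?Y" "card ?Y = Suc d"
    using path_facet_card i by auto
  obtain a b where a: "a \<in> ?X" and b: "b \<notin> ?X" and Y_eq: "?Y = insert b (?X - {a})"
    using exchange_of_card_Int[OF X(1) Y(1) X(2) Y(2)] path_card_Int_eq_iff i by auto
  have "a \<in> xs ! (i - 1)" if "0 < i"
  proof (rule ccontr)
    assume a_out: "a \<notin> xs ! (i - 1)"
    let ?W = "xs ! (i - 1)"
    have W: "finite ?W" "card ?W = Suc d" using path_facet_card i by auto
    have "card (?W \<inter> ?X) = d" using path_card_Int_eq_iff i that by simp
    then have "d \<le> card (?W \<inter> ?Y)" using card_Int_exchange_ge[OF X] a a_out Y_eq by simp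
    moreover have "?W \<noteq> ?Y" using path_distinct i by (simp add: nth_eq_iff_index_eq)
    then have "card (?W \<inter> ?Y) < Suc d" using card_Int_less[OF W(1) Y(1)] W Y by simp
    ultimately have "card (?W \<inter> ?Y) = d" by simp
    then show False using path_card_Int_eq_iff i that by simp
  qed
  moreover have "b \<notin> \<Union>(set (take (Suc i) xs))"
  proof
    assume "b \<in> \<Union>(set (take (Suc i) xs))"
    then obtain l where "l \<le> i" "b \<in> xs ! l" by (auto simp: in_set_conv_nth less_Suc_eq_le)
    then have "b \<in> ?X" using vertex_facets_interval[of l i "Suc i" b] Y_eq i by auto
    then show False using b by simp
  qed
  ultimately show "\<exists>a b. a \<in> ?X \<and> (i = 0 \<or> a \<in> xs ! (i - 1)) \<and> b \<notin> \<Union>(set (take (Suc i) xs)) \<and>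
      ?Y = insert b (?X - {a})"
    using a Y_eq by blast
qed

lemma skeleton_hamiltonian:
  assumes "2 \<le> d"
  shows "skeleton_hamiltonian K"
proof -
  obtain s where "s \<in> K" using pure unfolding pure_def by blast
  then obtain F where "F \<in> facets K" "s \<subseteq> F"
    by (rule facet_containing[OF simplicial_complex_finite[OF complex]])
  then have "facets K \<noteq> {}" by blast
  then have "xs \<noteq> []" using path_facets by auto
  moreover have "finite (xs ! 0)" "3 \<le> card (xs ! 0)"
    using path_facet_card[of 0] \<open>xs \<noteq> []\<close> assms by auto
  ultimately obtain vs where "covering_cycle (set xs) vs"
    using exchange_chain_covering_cycle[OF path_exchange_chain] by blast
  then show ?thesis unfolding path_facets by (rule skeleton_hamiltonian_of_covering_cycle[OF complex])
qed

end

theorem mainTheorem5: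
  fixes K :: "'a set set" and d :: nat
  assumes "d \<ge> 2"
    and "simplicial_complex K"
    and "pure d K"
    and "shellable d K"
    and "dual_graph_is_path d K"
  shows "skeleton_hamiltonian K"
proof -
  obtain ys where shelling: "distinct ys" "set ys = facets K"
    "\<And>k. 0 < k \<Longrightarrow> k < length ys \<Longrightarrow> \<exists>j<k. card (ys ! j \<inter> ys ! k) = d"
    "\<And>j k. j < k \<Longrightarrow> k < length ys \<Longrightarrow> ys ! j \<inter> ys ! k \<noteq> {} \<Longrightarrow>
       \<exists>j'<k. ys ! j \<inter> ys ! k \<subseteq> ys ! j' \<and> card (ys ! j' \<inter> ys ! k) = d"
    using shellable_shelling_order[of d K] assms(1,2,4) by auto
  obtain xs where "distinct xs" "set xs = facets K"
    "\<forall>i j. i < length xs \<and> j < length xs \<longrightarrow>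
       (dual_adj d (xs ! i) (xs ! j) \<longleftrightarrow> (i = Suc j \<or> j = Suc i))"
    using assms(5) unfolding dual_graph_is_path_def by blast
  then interpret shelled_facet_path K d xs ys
    using assms(2,3) shelling by unfold_locales auto
  show ?thesis using assms(1) by (rule skeleton_hamiltonian)
qed

end
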